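(* (i) For real $p\neq 0$, the inequality $\frac{2}{3}\left( \frac{\sin x}{x}\right) ^{p}+\frac{1}{3}\left( \frac{\tan x}{x}\right) ^{p}>1$ holds for all $x\in(0,\pi/2)$ if and only if $p>0$ or $p\leq -\frac{\ln 3-\ln 2}{\ln \pi -\ln 2}$. (ii) For real $q\neq 0$, the inequality $\frac{2}{3}\left( \frac{\sin x}{x}\right) ^{q}+\frac{1}{3}\left( \frac{\tan x}{x}\right) ^{q}<1$ holds for all $x\in(0,\pi/2)$ if and only if $-4/5\leq q<0$. *)

theory Defs
  imports Complex_Main
begin

end

(*
  For fixed x, G(p) = 2/3 (sin x / x)^p + 1/3 (tan x / x)^p is a convex function of p with G(0) = 1.
  Hence G > 1 for all p > 0 once G(-4/5) < 1, and for all p <= -c once G(-c) > 1, where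
  c = (ln 3 - ln 2) / (ln pi - ln 2); likewise G < 1 on [-4/5, 0).

  For a > 0 we have G(-a) = exp (a L(a, x)) with L(a, x) = ln (x / sin x) + ln ((2 + cos^a x) / 3) / a.
  L(a, .) tends to 0 at 0 and to ln (pi/2) + ln (2/3) / a at pi/2; the latter has the sign of a - c.
  The derivative of L(a, .) has the sign of a function W with W(0) = 0 whose derivative is a negative
  multiple of tau(a, cos x), where tau(a, t) = t^a - 2 t^(2-a) + a t^2 + 1 - a.  For 4/5 < a < 1 the
  derivative of tau(a, .) is convex on (0, 1), so tau(a, .) changes sign only once there, from positive
  to negative; thus W rises and then falls, and L(c, .) is unimodal with both limits 0, hence positive.
  For a = 4/5, tau is positive on (0, 1), so L(4/5, .) decreases from 0.  The remaining parameters are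
  excluded locally: L(a, .) < 0 near pi/2 when 0 < a < c, and L(a, .) > 0 near 0 when 4/5 < a < 1.
*)

theory Submission
  imports Defs "HOL-Analysis.Analysis" "HOL-Real_Asymp.Real_Asymp"
begin

lemma convex_on_less_right:
  fixes f :: "real \<Rightarrow> real"
  assumes "convex_on I f" "x \<in> I" "y \<in> I" "x < t" "t < y" "f x < f t"
  shows "f t < f y"
proof -
  have "0 < (f x - f t) / (x - t)"
    using assms by (simp add: divide_neg_neg)
  also have "\<dots> \<le> (f t - f y) / (t - y)"
    using convex_on_slope_le[OF assms(1-5)] by linarith
  finally show ?thesis
    using assms by (simp add: zero_less_divide_iff)
qed

lemma convex_on_less_left:
  fixes f :: "real \<Rightarrow> real"
  assumes "convex_on I f" "x \<in> I" "y \<in> I" "x < t" "t < y" "f y < f t"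
  shows "f t < f x"
proof -
  have "(f x - f t) / (x - t) \<le> (f t - f y) / (t - y)"
    using convex_on_slope_le[OF assms(1-5)] by linarith
  also have "\<dots> < 0"
    using assms by (simp add: divide_pos_neg)
  finally show ?thesis
    using assms by (simp add: divide_less_0_iff)
qed

lemma convex_on_powr_exponent: "convex_on UNIV (\<lambda>p. u powr p)"
proof (cases "u = 0")
  case False
  have "convex_on UNIV (\<lambda>p. exp (p * ln u))"
    by (intro f''_ge0_imp_convex derivative_eq_intros | simp)+
      (metis mult.assoc mult_nonneg_nonneg exp_ge_zero zero_le_square)
  then show ?thesis
    using False by (simp add: powr_def)
qed (simp add: convex_on_const)

lemma less_between_falls_of_convex_deriv:
  fixes f f' :: "real \<Rightarrow> real"
  assumes deriv: "\<And>t. b \<le> t \<Longrightarrow> t \<le> e \<Longrightarrow> (f has_real_derivative f' t) (at t)"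
    and convex: "convex_on {b..e} f'"
    and order: "b < c" "c < d" "d < e"
    and falls: "f c < f b" "f e < f d"
  shows "f d < f c"
proof (rule ccontr)
  assume rise: "\<not> f d < f c"
  obtain x1 where x1: "b < x1" "x1 < c" "f c - f b = (c - b) * f' x1"
    using MVT2[of b c f f'] deriv order by force
  obtain x2 where x2: "c < x2" "x2 < d" "f d - f c = (d - c) * f' x2"
    using MVT2[of c d f f'] deriv order by force
  obtain x3 where x3: "d < x3" "x3 < e" "f e - f d = (e - d) * f' x3"
    using MVT2[of d e f f'] deriv order by force
  have "(c - b) * f' x1 < 0" "0 \<le> (d - c) * f' x2" "(e - d) * f' x3 < 0"
    using x1 x2 x3 falls rise by linarith+
  then have "f' x1 < 0" "0 \<le> f' x2" "f' x3 < 0"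
    using order by (simp_all add: mult_less_0_iff zero_le_mult_iff)
  moreover have "f' x2 \<le> max (f' x1) (f' x3)"
    by (rule convex_on_le_max[OF convex_on_subset[OF convex]])
      (use x1 x2 x3 in auto)
  ultimately show False
    by linarith
qed

lemma tendsto_at_right_less_of_deriv_pos:
  fixes f :: "real \<Rightarrow> real"
  assumes "l < x"
    and deriv: "\<And>t. l < t \<Longrightarrow> t < x \<Longrightarrow> \<exists>D. (f has_real_derivative D) (at t) \<and> 0 < D"
    and "isCont f x" and lim: "(f \<longlongrightarrow> y) (at_right l)"
  shows "y < f x"
proof -
  have incr: "f s < f t" if "l < s" "s < t" "t \<le> x" for s t
  proof (rule DERIV_pos_imp_increasing_open[OF \<open>s < t\<close>])
    show "\<exists>D. (f has_real_derivative D) (at u) \<and> 0 < D" if "s < u" "u < t" for u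
      using deriv that \<open>l < s\<close> \<open>t \<le> x\<close> by simp
    have "isCont f u" if "s \<le> u" "u \<le> t" for u
      using deriv[of u] \<open>isCont f x\<close> that \<open>l < s\<close> \<open>t \<le> x\<close>
      by (cases "u = x") (auto dest: DERIV_isCont)
    then show "continuous_on {s..t} f"
      by (simp add: continuous_at_imp_continuous_on)
  qed
  define m where "m = (l + x) / 2"
  have m: "l < m" "m < x"
    using \<open>l < x\<close> by (simp_all add: m_def)
  have "y \<le> f m"
  proof (rule tendsto_upperbound[OF lim])
    show "\<forall>\<^sub>F t in at_right l. f t \<le> f m"
      by (rule eventually_at_rightI[OF _ m(1)]) (use incr m in \<open>fastforce intro: less_imp_le\<close>)
  qed simp
  then show ?thesis
    using incr[of m x] m by simp
qed

lemma tendsto_at_right_greater_of_deriv_neg: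
  fixes f :: "real \<Rightarrow> real"
  assumes "l < x"
    and deriv: "\<And>t. l < t \<Longrightarrow> t < x \<Longrightarrow> \<exists>D. (f has_real_derivative D) (at t) \<and> D < 0"
    and "isCont f x" and lim: "(f \<longlongrightarrow> y) (at_right l)"
  shows "f x < y"
proof -
  have "- y < - f x"
  proof (rule tendsto_at_right_less_of_deriv_pos[OF \<open>l < x\<close>])
    show "\<exists>D. ((\<lambda>t. - f t) has_real_derivative D) (at t) \<and> 0 < D" if "l < t" "t < x" for t
      using deriv[OF that] by (auto intro: DERIV_minus)
  qed (use assms in \<open>auto intro: tendsto_minus\<close>)
  then show ?thesis
    by simp
qed

lemma tendsto_at_left_less_of_deriv_neg:
  fixes f :: "real \<Rightarrow> real"
  assumes "x < r"
    and deriv: "\<And>t. x < t \<Longrightarrow> t < r \<Longrightarrow> \<exists>D. (f has_real_derivative D) (at t) \<and> D < 0"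
    and "isCont f x" and lim: "(f \<longlongrightarrow> y) (at_left r)"
  shows "y < f x"
proof -
  have decr: "f t < f s" if "x \<le> s" "s < t" "t < r" for s t
  proof (rule DERIV_neg_imp_decreasing_open[OF \<open>s < t\<close>])
    show "\<exists>D. (f has_real_derivative D) (at u) \<and> D < 0" if "s < u" "u < t" for u
      using deriv that \<open>x \<le> s\<close> \<open>t < r\<close> by simp
    have "isCont f u" if "s \<le> u" "u \<le> t" for u
      using deriv[of u] \<open>isCont f x\<close> that \<open>x \<le> s\<close> \<open>t < r\<close>
      by (cases "u = x") (auto dest: DERIV_isCont)
    then show "continuous_on {s..t} f"
      by (simp add: continuous_at_imp_continuous_on)
  qed
  define m where "m = (x + r) / 2"
  have m: "x < m" "m < r"
    using \<open>x < r\<close> by (simp_all add: m_def)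
  have "y \<le> f m"
  proof (rule tendsto_upperbound[OF lim])
    show "\<forall>\<^sub>F t in at_left r. f t \<le> f m"
      by (rule eventually_at_leftI[OF _ m(2)]) (use decr m in \<open>fastforce intro: less_imp_le\<close>)
  qed simp
  then show ?thesis
    using decr[of x m] m by simp
qed

definition tau :: "real \<Rightarrow> real \<Rightarrow> real" where
  "tau a c = c powr a - 2 * c powr (2 - a) + a * c\<^sup>2 + (1 - a)"

definition dtau :: "real \<Rightarrow> real \<Rightarrow> real" where
  "dtau a c = a * c powr (a - 1) - 2 * (2 - a) * c powr (1 - a) + 2 * a * c"

lemma tau_has_real_derivative: "0 < c \<Longrightarrow> (tau a has_real_derivative dtau a c) (at c)"
  unfolding tau_def dtau_def by (auto intro!: derivative_eq_intros)

lemma convex_on_dtau: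
  assumes "0 \<le> a" "a \<le> 1"
  shows "convex_on {0<..} (dtau a)"
proof (rule convex_on_realI)
  show "(dtau a has_real_derivative
      a * (a - 1) * c powr (a - 2) - 2 * (2 - a) * (1 - a) * c powr (- a) + 2 * a) (at c)"
    if "c \<in> {0<..}" for c
    using that unfolding dtau_def by (auto intro!: derivative_eq_intros)
  show "a * (a - 1) * c powr (a - 2) - 2 * (2 - a) * (1 - a) * c powr (- a) + 2 * a
      \<le> a * (a - 1) * d powr (a - 2) - 2 * (2 - a) * (1 - a) * d powr (- a) + 2 * a"
    if "c \<in> {0<..}" "d \<in> {0<..}" "c \<le> d" for c d
  proof -
    have "d powr (a - 2) \<le> c powr (a - 2)" "d powr (- a) \<le> c powr (- a)"
      using that assms by (auto intro: powr_mono2')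
    moreover have "a * (a - 1) \<le> 0" "0 \<le> 2 * (2 - a) * (1 - a)"
      using assms by (auto simp: mult_nonneg_nonpos)
    ultimately show ?thesis
      by (smt (verit) mult_left_mono mult_left_mono_neg)
  qed
qed auto

lemma tau_one: "tau a 1 = 0"
  by (simp add: tau_def)

lemma tau_pos_near_zero:
  assumes "0 \<le> a" "a < 1" "0 < c" "2 * c < 1 - a"
  shows "0 < tau a c"
proof -
  have "c powr (2 - a) \<le> c"
    using assms powr_mono'[of 1 "2 - a" c] by auto
  moreover have "0 \<le> c powr a" "0 \<le> a * c\<^sup>2"
    using assms by simp_all
  ultimately show ?thesis
    using assms unfolding tau_def by linarith
qed

lemma tau_neg_near_one:
  assumes "4/5 < a"
  shows "\<forall>\<^sub>F c in at_left 1. tau a c < 0"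
proof -
  have "0 < dtau a 1"
    using assms by (simp add: dtau_def)
  from DERIV_pos_inc_left[OF tau_has_real_derivative this]
  obtain d where d: "0 < d" "\<And>h. 0 < h \<Longrightarrow> h < d \<Longrightarrow> tau a (1 - h) < 0"
    unfolding tau_one by auto
  show ?thesis
    unfolding eventually_at_left_field
  proof (intro exI conjI allI impI)
    show "1 - d < 1"
      using d by simp
    show "tau a c < 0" if "1 - d < c" "c < 1" for c
      using d(2)[of "1 - c"] that by simp
  qed
qed

text \<open>Near \<open>0\<close> the function \<open>tau a\<close> is positive and just below \<open>1\<close> it is negative; since
  its derivative is convex, it changes sign only once on \<open>(0, 1)\<close>.\<close>

lemma tau_pos_of_le:
  assumes a: "4/5 < a" "a < 1" and cd: "0 < c" "c < d" "d < 1" and "0 \<le> tau a d"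
  shows "0 < tau a c"
proof (rule ccontr)
  assume "\<not> 0 < tau a c"
  obtain e where e: "d < e" "e < 1" "tau a e < 0"
    using tau_neg_near_one[OF a(1)] cd(3)
    unfolding eventually_at_left_field by (metis dense less_trans max.strict_boundedE max_less_iff_conj)
  define b where "b = min (c / 2) ((1 - a) / 4)"
  have "b \<le> (1 - a) / 4"
    by (simp add: b_def min_def)
  then have b: "0 < b" "b < c" "0 < tau a b"
    using a cd by (auto simp: b_def intro!: tau_pos_near_zero)
  have "tau a d < tau a c"
  proof (rule less_between_falls_of_convex_deriv[of b e "tau a" "dtau a" c d])
    show "(tau a has_real_derivative dtau a t) (at t)" if "b \<le> t" "t \<le> e" for t
      using that b by (intro tau_has_real_derivative) simp
    show "convex_on {b..e} (dtau a)"
      using b a by (intro convex_on_subset[OF convex_on_dtau]) auto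
  qed (use b e cd \<open>0 \<le> tau a d\<close> \<open>\<not> 0 < tau a c\<close> in auto)
  then show False
    using \<open>0 \<le> tau a d\<close> \<open>\<not> 0 < tau a c\<close> by simp
qed

lemma tau_four_fifths_pos:
  assumes "0 < c" "c < 1"
  shows "0 < tau (4/5) c"
proof -
  define w where "w = c powr (1/5)"
  have w: "0 < w" "w < 1"
    using assms powr_less_mono2[of "1/5" c 1] by (auto simp: w_def)
  then have "w\<^sup>2 < 1"
    by (auto simp: power_less_one_iff)
  have pow: "c powr (real n / 5) = w ^ n" for n
    using assms by (simp add: w_def powr_powr flip: powr_realpow)
  have "tau (4/5) c = w ^ 4 - 2 * w ^ 6 + 4/5 * (w ^ 5)\<^sup>2 + 1/5"
    unfolding tau_def using pow[of 4] pow[of 6] pow[of 5] assms by simp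
  also have "\<dots> = (w\<^sup>2 - 1)\<^sup>2 * (4 * w ^ 6 + 8 * w ^ 4 + 2 * w\<^sup>2 + 1) / 5"
    by (simp add: field_simps) algebra
  also have "\<dots> > 0"
    using w \<open>w\<^sup>2 < 1\<close> by (intro divide_pos_pos mult_pos_pos add_pos_pos) auto
  finally show ?thesis .
qed

definition crit_exp :: real where
  "crit_exp = (ln 3 - ln 2) / (ln pi - ln 2)"

lemma ln_two_less_ln_pi: "ln 2 < ln pi"
  using pi_gt3 by simp

lemma crit_exp_less_one: "crit_exp < 1"
  using pi_gt3 ln_two_less_ln_pi by (simp add: crit_exp_def divide_less_eq)

lemma four_fifths_less_crit_exp: "4/5 < crit_exp"
proof -
  have "pi ^ 4 < 3.2 ^ 4"
    using pi_approx by (intro power_strict_mono) auto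
  also have "(3.2::real) ^ 4 < 243 / 2"
    by (simp add: power_divide)
  finally have "ln (pi ^ 4) < ln (243 / 2)"
    by simp
  moreover have "ln (pi ^ 4) = 4 * ln pi"
    by (simp add: ln_realpow)
  moreover have "ln (243 / 2 :: real) = 5 * ln 3 - ln 2"
    using ln_realpow[of 3 5] by (simp add: ln_div)
  ultimately show ?thesis
    using ln_two_less_ln_pi by (simp add: crit_exp_def less_divide_eq)
qed

definition sin_tan_mean :: "real \<Rightarrow> real \<Rightarrow> real" where
  "sin_tan_mean p x = 2/3 * (sin x / x) powr p + 1/3 * (tan x / x) powr p"

text \<open>For \<open>a > 0\<close>, \<open>log_mean a x = ln (sin_tan_mean (- a) x) / a\<close>.\<close>

definition log_mean :: "real \<Rightarrow> real \<Rightarrow> real" where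
  "log_mean a x = ln x - ln (sin x) + ln ((2 + cos x powr a) / 3) / a"

text \<open>Up to a positive factor, the derivative of \<open>log_mean a\<close>.\<close>

definition log_mean_numer :: "real \<Rightarrow> real \<Rightarrow> real" where
  "log_mean_numer a x =
     sin x * ((cos x + 2 * cos x powr (1 - a)) / (1 + 2 * cos x * cos x powr (1 - a))) - x"

lemma sin_tan_mean_zero:
  assumes "0 < x" "x < pi/2"
  shows "sin_tan_mean 0 x = 1"
  using assms sin_gt_zero[of x] cos_gt_zero[of x] by (simp add: sin_tan_mean_def tan_def)

lemma convex_on_sin_tan_mean: "convex_on UNIV (\<lambda>p. sin_tan_mean p x)"
  unfolding sin_tan_mean_def by (intro convex_on_add convex_on_cmul convex_on_powr_exponent) auto

lemma sin_tan_mean_neg_eq_exp: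
  assumes a: "0 < a" and x: "0 < x" "x < pi/2"
  shows "sin_tan_mean (- a) x = exp (a * log_mean a x)"
proof -
  have c: "0 < cos x" and s: "0 < sin x"
    using x by (auto intro!: cos_gt_zero sin_gt_zero)
  define E where "E = exp (a * (ln x - ln (sin x)))"
  have sin_pow: "(sin x / x) powr (- a) = E"
    unfolding E_def using s x by (simp add: powr_def ln_div algebra_simps)
  have "tan x / x = sin x / (cos x * x)"
    by (simp add: tan_def)
  then have tan_pow: "(tan x / x) powr (- a) = E * cos x powr a"
    unfolding E_def using c s x by (simp add: powr_def ln_div ln_mult algebra_simps flip: exp_add)
  have "a * log_mean a x = a * (ln x - ln (sin x)) + ln ((2 + cos x powr a) / 3)"
    unfolding log_mean_def using a by (simp add: algebra_simps)
  then have "exp (a * log_mean a x) = E * ((2 + cos x powr a) / 3)"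
    unfolding E_def by (simp add: exp_add add_pos_nonneg)
  then show ?thesis
    unfolding sin_tan_mean_def sin_pow tan_pow by (simp add: algebra_simps)
qed

lemma one_less_sin_tan_mean_neg_iff:
  assumes "0 < a" "0 < x" "x < pi/2"
  shows "1 < sin_tan_mean (- a) x \<longleftrightarrow> 0 < log_mean a x"
  using assms by (simp add: sin_tan_mean_neg_eq_exp zero_less_mult_iff)

lemma sin_tan_mean_neg_less_one_iff:
  assumes "0 < a" "0 < x" "x < pi/2"
  shows "sin_tan_mean (- a) x < 1 \<longleftrightarrow> log_mean a x < 0"
  using assms by (simp add: sin_tan_mean_neg_eq_exp mult_less_0_iff)

lemma log_mean_has_derivative:
  assumes a: "0 < a" and x: "0 < x" "x < pi/2"
  obtains P where "0 < P" "(log_mean a has_real_derivative P * log_mean_numer a x) (at x)"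
proof -
  have c: "0 < cos x" and s: "0 < sin x"
    using x by (auto intro!: cos_gt_zero sin_gt_zero)
  define K where "K = cos x powr (1 - a)"
  have K: "0 < K"
    using c by (simp add: K_def)
  have pow_a: "cos x powr a = cos x / K" and pow_a1: "cos x powr (a - 1) = 1 / K"
    using c unfolding K_def by (simp_all add: powr_diff powr_minus_divide[symmetric] flip: powr_minus)
  have "0 < 2 + cos x / K"
    using c K by (simp add: add_pos_pos)
  then have deriv: "(log_mean a has_real_derivative
      1 / x - cos x / sin x - sin x / (2 * K + cos x)) (at x)"
    unfolding log_mean_def using a x c s K
    by (auto intro!: derivative_eq_intros simp: pow_a pow_a1) (simp add: divide_simps)
  have pos: "0 < 1 + 2 * K * cos x" "0 < 1 + 2 * cos x * K" "0 < 2 * K + cos x"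
    using K c by (simp_all add: add_pos_pos)
  have "1 / x - cos x / sin x - sin x / (2 * K + cos x)
      = (1 + 2 * K * cos x) / (x * sin x * (2 * K + cos x)) * log_mean_numer a x"
    unfolding log_mean_numer_def K_def[symmetric] using x s pos
    by (simp add: divide_simps) (use sin_cos_squared_add[of x] in algebra)
  moreover have "0 < (1 + 2 * K * cos x) / (x * sin x * (2 * K + cos x))"
    using pos x s by simp
  ultimately show ?thesis
    using that deriv by simp
qed

lemma log_mean_deriv_pos:
  assumes "0 < a" "0 < x" "x < pi/2" "0 < log_mean_numer a x"
  shows "\<exists>D. (log_mean a has_real_derivative D) (at x) \<and> 0 < D"
  using log_mean_has_derivative[OF assms(1-3)] assms(4) by (metis mult_pos_pos)

lemma log_mean_deriv_neg:
  assumes "0 < a" "0 < x" "x < pi/2" "log_mean_numer a x < 0"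
  shows "\<exists>D. (log_mean a has_real_derivative D) (at x) \<and> D < 0"
  using log_mean_has_derivative[OF assms(1-3)] assms(4) by (metis mult_pos_neg)

lemma isCont_log_mean: "0 < a \<Longrightarrow> 0 < x \<Longrightarrow> x < pi/2 \<Longrightarrow> isCont (log_mean a) x"
  using log_mean_has_derivative by (metis DERIV_isCont)

lemma log_mean_numer_has_derivative:
  assumes x: "0 < x" "x < pi/2"
  obtains Q where "0 < Q" "(log_mean_numer a has_real_derivative - (Q * tau a (cos x))) (at x)"
proof -
  have c: "0 < cos x" and s: "0 < sin x"
    using x by (auto intro!: cos_gt_zero sin_gt_zero)
  define K where "K = cos x powr (1 - a)"
  have K: "0 < K"
    using c by (simp add: K_def)
  have pow_a: "cos x powr a = cos x / K" and pow_a1: "cos x powr - a = K / cos x"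
    using c unfolding K_def by (simp_all add: powr_diff powr_minus_divide powr_add)
  have pow_2a: "cos x powr (2 - a) = cos x * K"
    using c powr_add[of "cos x" 1 "1 - a"] unfolding K_def by simp
  have pos: "0 < 1 + 2 * cos x * K"
    using K c by (simp add: add_pos_pos)
  define Q where "Q = 2 * (sin x)\<^sup>2 * K / (cos x * (1 + 2 * cos x * K)\<^sup>2)"
  have "0 < Q"
    using c s K pos by (simp add: Q_def)
  moreover have "(log_mean_numer a has_real_derivative - (Q * tau a (cos x))) (at x)"
    unfolding log_mean_numer_def K_def[symmetric] tau_def Q_def pow_a pow_2a using c K pos
    by (auto intro!: derivative_eq_intros simp: pow_a1 K_def[symmetric])
      (simp add: divide_simps, use sin_cos_squared_add[of x] in algebra)
  ultimately show ?thesis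
    using that by blast
qed

lemma isCont_log_mean_numer:
  assumes "0 < cos x"
  shows "isCont (log_mean_numer a) x"
proof -
  have "0 < 1 + 2 * cos x * cos x powr (1 - a)"
    using assms by (simp add: add_pos_pos)
  then show ?thesis
    unfolding log_mean_numer_def using assms by (intro continuous_intros) auto
qed

lemma log_mean_numer_pos_of_tau_neg:
  assumes "0 < y" "y < pi/2" and tau: "\<And>t. 0 < t \<Longrightarrow> t < y \<Longrightarrow> tau a (cos t) < 0"
  shows "0 < log_mean_numer a y"
proof -
  have "log_mean_numer a 0 < log_mean_numer a y"
  proof (rule DERIV_pos_imp_increasing_open[OF \<open>0 < y\<close>])
    fix t assume t: "0 < t" "t < y"
    obtain Q where Q: "0 < Q" "(log_mean_numer a has_real_derivative - (Q * tau a (cos t))) (at t)"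
      using log_mean_numer_has_derivative[of t a] t assms by auto
    then show "\<exists>D. (log_mean_numer a has_real_derivative D) (at t) \<and> 0 < D"
      using tau[OF t] by (intro exI[of _ "- (Q * tau a (cos t))"]) (auto simp: mult_pos_neg)
  next
    show "continuous_on {0..y} (log_mean_numer a)"
      using assms by (intro continuous_at_imp_continuous_on ballI isCont_log_mean_numer cos_gt_zero_pi) auto
  qed
  then show ?thesis
    by (simp add: log_mean_numer_def)
qed

lemma log_mean_numer_neg_of_tau_pos:
  assumes "0 < y" "y < pi/2" and tau: "\<And>t. 0 < t \<Longrightarrow> t < y \<Longrightarrow> 0 < tau a (cos t)"
  shows "log_mean_numer a y < 0"
proof -
  have "log_mean_numer a y < log_mean_numer a 0"
  proof (rule DERIV_neg_imp_decreasing_open[OF \<open>0 < y\<close>])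
    fix t assume t: "0 < t" "t < y"
    obtain Q where Q: "0 < Q" "(log_mean_numer a has_real_derivative - (Q * tau a (cos t))) (at t)"
      using log_mean_numer_has_derivative[of t a] t assms by auto
    then show "\<exists>D. (log_mean_numer a has_real_derivative D) (at t) \<and> D < 0"
      using tau[OF t] by (intro exI[of _ "- (Q * tau a (cos t))"]) auto
  next
    show "continuous_on {0..y} (log_mean_numer a)"
      using assms by (intro continuous_at_imp_continuous_on ballI isCont_log_mean_numer cos_gt_zero_pi) auto
  qed
  then show ?thesis
    by (simp add: log_mean_numer_def)
qed

lemma log_mean_numer_neg_persists:
  assumes a: "4/5 < a" "a < 1" and x: "0 < x" "x < y" "y < pi/2" and "log_mean_numer a x \<le> 0"
  shows "log_mean_numer a y < 0"
proof -
  obtain z where z: "0 < z" "z < x" "0 \<le> tau a (cos z)"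
    using log_mean_numer_pos_of_tau_neg[of x a] assms by force
  have "log_mean_numer a y < log_mean_numer a x"
  proof (rule DERIV_neg_imp_decreasing[OF \<open>x < y\<close>])
    fix t assume t: "x \<le> t" "t \<le> y"
    have "0 < cos t" "cos t < cos z" "cos z < 1"
      using z t x cos_monotone_0_pi[of z t] cos_monotone_0_pi[of 0 z] by (auto intro!: cos_gt_zero)
    then have "0 < tau a (cos t)"
      using tau_pos_of_le[OF a] z(3) by blast
    moreover obtain Q where "0 < Q" "(log_mean_numer a has_real_derivative - (Q * tau a (cos t))) (at t)"
      using log_mean_numer_has_derivative[of t a] t x by auto
    ultimately show "\<exists>D. (log_mean_numer a has_real_derivative D) (at t) \<and> D < 0"
      by (intro exI[of _ "- (Q * tau a (cos t))"]) auto
  qed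
  then show ?thesis
    using assms by simp
qed

lemma log_mean_tendsto_zero: "(log_mean a \<longlongrightarrow> 0) (at_right 0)"
proof -
  have "((\<lambda>x::real. cos x) \<longlongrightarrow> 1) (at_right 0)"
    using tendsto_cos[OF tendsto_ident_at[of "0::real" "{0<..}"]] by simp
  then have "((\<lambda>x. ln ((2 + cos x powr a) / 3)) \<longlongrightarrow> ln ((2 + 1 powr a) / 3)) (at_right 0)"
    by (intro tendsto_ln tendsto_divide tendsto_add tendsto_const tendsto_powr) simp_all
  then have "((\<lambda>x. ln ((2 + cos x powr a) / 3) / a) \<longlongrightarrow> 0) (at_right 0)"
    by (intro tendsto_divide_zero) simp
  moreover have "((\<lambda>x::real. ln x - ln (sin x)) \<longlongrightarrow> 0) (at_right 0)"
    by real_asymp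
  ultimately have "((\<lambda>x. ln x - ln (sin x) + ln ((2 + cos x powr a) / 3) / a) \<longlongrightarrow> 0 + 0) (at_right 0)"
    by (intro tendsto_add)
  then show ?thesis
    unfolding log_mean_def by simp
qed

lemma log_mean_tendsto_pi_half:
  assumes "0 < a"
  shows "(log_mean a \<longlongrightarrow> (ln pi - ln 2) * (a - crit_exp) / a) (at_left (pi/2))"
proof -
  let ?F = "at_left (pi/2 :: real)"
  have ident: "((\<lambda>x. x) \<longlongrightarrow> pi/2) ?F"
    by (rule tendsto_ident_at)
  have "((\<lambda>x. ln x - ln (sin x)) \<longlongrightarrow> ln (pi/2) - ln 1) ?F"
    using tendsto_sin[OF ident] by (intro tendsto_diff tendsto_ln ident) simp_all
  moreover have "((\<lambda>x. cos x powr a) \<longlongrightarrow> 0) ?F"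
  proof (rule tendsto_zero_powrI[OF _ tendsto_const _ assms])
    show "((\<lambda>x. cos x) \<longlongrightarrow> 0) ?F"
      using tendsto_cos[OF ident] by simp
    show "\<forall>\<^sub>F x in ?F. 0 \<le> cos x"
      by (intro eventually_at_leftI[of 0]) (auto intro!: cos_ge_zero)
  qed
  then have "((\<lambda>x. ln ((2 + cos x powr a) / 3) / a) \<longlongrightarrow> ln ((2 + 0) / 3) / a) ?F"
    using assms by (intro tendsto_divide tendsto_ln tendsto_add tendsto_const) simp_all
  ultimately have "((\<lambda>x. ln x - ln (sin x) + ln ((2 + cos x powr a) / 3) / a)
      \<longlongrightarrow> ln (pi/2) - ln 1 + ln ((2 + 0) / 3) / a) ?F"
    by (intro tendsto_add)
  moreover have "ln (pi/2) - ln 1 + ln ((2 + 0) / 3) / a = (ln pi - ln 2) * (a - crit_exp) / a"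
    using assms ln_two_less_ln_pi by (simp add: crit_exp_def ln_div field_simps)
  ultimately show ?thesis
    unfolding log_mean_def by simp
qed

lemma log_mean_crit_exp_pos:
  assumes x: "0 < x" "x < pi/2"
  shows "0 < log_mean crit_exp x"
proof -
  have a: "4/5 < crit_exp" "crit_exp < 1" "0 < crit_exp"
    using four_fifths_less_crit_exp crit_exp_less_one by auto
  show ?thesis
  proof (cases "0 < log_mean_numer crit_exp x")
    case True
    then have "0 < log_mean_numer crit_exp t" if "0 < t" "t < x" for t
      using log_mean_numer_neg_persists[OF a(1,2) that x(2)] by force
    then show ?thesis
      using x a by (intro tendsto_at_right_less_of_deriv_pos[OF x(1) _ _ log_mean_tendsto_zero])
        (auto intro: log_mean_deriv_pos isCont_log_mean)
  next
    case False
    then have "log_mean_numer crit_exp t < 0" if "x < t" "t < pi/2" for t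
      using log_mean_numer_neg_persists[OF a(1,2) x(1) that] by simp
    moreover have "(log_mean crit_exp \<longlongrightarrow> 0) (at_left (pi/2))"
      using log_mean_tendsto_pi_half[OF a(3)] by simp
    ultimately show ?thesis
      using x a by (intro tendsto_at_left_less_of_deriv_neg[OF x(2)])
        (auto intro: log_mean_deriv_neg isCont_log_mean)
  qed
qed

lemma log_mean_four_fifths_neg:
  assumes x: "0 < x" "x < pi/2"
  shows "log_mean (4/5) x < 0"
proof -
  have "log_mean_numer (4/5) t < 0" if "0 < t" "t < pi/2" for t
  proof (rule log_mean_numer_neg_of_tau_pos[OF that])
    fix u assume "0 < u" "u < t"
    then show "0 < tau (4/5) (cos u)"
      using that cos_monotone_0_pi[of 0 u] by (intro tau_four_fifths_pos cos_gt_zero) auto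
  qed
  then show ?thesis
    using x by (intro tendsto_at_right_greater_of_deriv_neg[OF x(1) _ _ log_mean_tendsto_zero])
      (auto intro: log_mean_deriv_neg isCont_log_mean)
qed

lemma log_mean_pos_near_zero:
  assumes a: "4/5 < a" "a < 1"
  shows "\<exists>x. 0 < x \<and> x < pi/2 \<and> 0 < log_mean a x"
proof -
  have "filterlim (cos :: real \<Rightarrow> real) (at_left 1) (at_right 0)"
  proof (rule tendsto_imp_filterlim_at_left)
    show "((cos :: real \<Rightarrow> real) \<longlongrightarrow> 1) (at_right 0)"
      using tendsto_cos[OF tendsto_ident_at[of "0::real" "{0<..}"]] by simp
    show "\<forall>\<^sub>F x in at_right 0. cos x < (1::real)"
      using pi_gt3 by (intro eventually_at_rightI[of 0 1]) (auto intro!: cos_monotone_0_pi[of 0, simplified])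
  qed
  then have "\<forall>\<^sub>F x in at_right 0. tau a (cos x) < 0"
    by (rule eventually_compose_filterlim[OF tau_neg_near_one[OF a(1)]])
  then obtain b where b: "0 < b" "\<And>t. 0 < t \<Longrightarrow> t < b \<Longrightarrow> tau a (cos t) < 0"
    unfolding eventually_at_right_field by auto
  define x where "x = min (b / 2) 1"
  have x: "0 < x" "x < b" "x < pi/2"
    using b pi_gt3 by (auto simp: x_def)
  have "0 < log_mean_numer a t" if "0 < t" "t \<le> x" for t
    using that x b by (intro log_mean_numer_pos_of_tau_neg) auto
  then have "0 < log_mean a x"
    using x a by (intro tendsto_at_right_less_of_deriv_pos[OF x(1) _ _ log_mean_tendsto_zero])
      (auto intro: log_mean_deriv_pos isCont_log_mean)
  then show ?thesis
    using x by blast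
qed

lemma log_mean_neg_near_pi_half:
  assumes a: "0 < a" "a < crit_exp"
  shows "\<exists>x. 0 < x \<and> x < pi/2 \<and> log_mean a x < 0"
proof -
  have "(ln pi - ln 2) * (a - crit_exp) / a < 0"
    using a ln_two_less_ln_pi by (simp add: divide_neg_pos mult_pos_neg)
  then have "\<forall>\<^sub>F x in at_left (pi/2). log_mean a x < 0"
    by (rule order_tendstoD(2)[OF log_mean_tendsto_pi_half[OF a(1)]])
  moreover have "\<forall>\<^sub>F x in at_left (pi/2). 0 < x"
    by (intro eventually_at_leftI[of 0]) auto
  moreover have "\<forall>\<^sub>F x in at_left (pi/2). x < pi/2"
    by (simp add: eventually_at_filter)
  ultimately have "\<forall>\<^sub>F x in at_left (pi/2). 0 < x \<and> x < pi/2 \<and> log_mean a x < 0"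
    by eventually_elim auto
  then show ?thesis
    by (rule eventually_happens'[rotated]) simp
qed

lemma one_less_sin_tan_mean:
  assumes p: "0 < p \<or> p \<le> - crit_exp" and x: "0 < x" "x < pi/2"
  shows "1 < sin_tan_mean p x"
proof -
  have mean_zero: "sin_tan_mean 0 x = 1"
    using sin_tan_mean_zero[OF x] .
  have mean_crit: "1 < sin_tan_mean (- crit_exp) x"
    using one_less_sin_tan_mean_neg_iff[of crit_exp x] log_mean_crit_exp_pos[OF x] x
      four_fifths_less_crit_exp by simp
  consider "0 < p" | "p = - crit_exp" | "p < - crit_exp"
    using p by linarith
  then show ?thesis
  proof cases
    case 1
    have "sin_tan_mean (- (4/5)) x < 1"
      using sin_tan_mean_neg_less_one_iff[of "4/5" x] log_mean_four_fifths_neg[OF x] x by simp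
    then show ?thesis
      using convex_on_less_right[OF convex_on_sin_tan_mean[of x], of "- (4/5)" p 0] 1 mean_zero by simp
  next
    case 3
    then show ?thesis
      using convex_on_less_left[OF convex_on_sin_tan_mean[of x], of p 0 "- crit_exp"]
        four_fifths_less_crit_exp mean_zero mean_crit by simp
  qed (use mean_crit in simp)
qed

lemma sin_tan_mean_less_one:
  assumes q: "- (4/5) \<le> q" "q < 0" and x: "0 < x" "x < pi/2"
  shows "sin_tan_mean q x < 1"
proof -
  have mean_four_fifths: "sin_tan_mean (- (4/5)) x < 1"
    using sin_tan_mean_neg_less_one_iff[of "4/5" x] log_mean_four_fifths_neg[OF x] x by simp
  consider "sin_tan_mean q x \<le> sin_tan_mean (- (4/5)) x" | "q \<noteq> - (4/5)" "sin_tan_mean (- (4/5)) x < sin_tan_mean q x"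
    by force
  then show ?thesis
  proof cases
    case 2
    then show ?thesis
      using convex_on_less_right[OF convex_on_sin_tan_mean[of x], of "- (4/5)" 0 q] q
        sin_tan_mean_zero[OF x] by simp
  qed (use mean_four_fifths in simp)
qed

lemma one_less_sin_tan_mean_iff:
  assumes "p \<noteq> 0"
  shows "(\<forall>x. 0 < x \<and> x < pi/2 \<longrightarrow> 1 < sin_tan_mean p x) \<longleftrightarrow> 0 < p \<or> p \<le> - crit_exp"
proof
  assume "\<forall>x. 0 < x \<and> x < pi/2 \<longrightarrow> 1 < sin_tan_mean p x"
  moreover have "\<exists>x. 0 < x \<and> x < pi/2 \<and> sin_tan_mean p x < 1" if "- crit_exp < p" "p < 0"
    using log_mean_neg_near_pi_half[of "- p"] sin_tan_mean_neg_less_one_iff[of "- p"] that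
    by fastforce
  ultimately show "0 < p \<or> p \<le> - crit_exp"
    using assms by force
qed (use one_less_sin_tan_mean in blast)

lemma sin_tan_mean_less_one_iff:
  assumes "q \<noteq> 0"
  shows "(\<forall>x. 0 < x \<and> x < pi/2 \<longrightarrow> sin_tan_mean q x < 1) \<longleftrightarrow> - (4/5) \<le> q \<and> q < 0"
proof
  assume below: "\<forall>x. 0 < x \<and> x < pi/2 \<longrightarrow> sin_tan_mean q x < 1"
  have "\<not> (0 < q \<or> q \<le> - crit_exp)"
    using one_less_sin_tan_mean[of q "pi/4"] below[rule_format, of "pi/4"] pi_gt_zero by force
  moreover have "\<exists>x. 0 < x \<and> x < pi/2 \<and> 1 < sin_tan_mean q x" if "- 1 < q" "q < - (4/5)"
    using log_mean_pos_near_zero[of "- q"] one_less_sin_tan_mean_neg_iff[of "- q"] that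
    by fastforce
  ultimately show "- (4/5) \<le> q \<and> q < 0"
    using below crit_exp_less_one assms by force
qed (use sin_tan_mean_less_one in blast)

theorem proposition4p1:
  shows "(\<forall>p::real. p \<noteq> 0 \<longrightarrow>
           ((\<forall>x::real. 0 < x \<and> x < pi / 2 \<longrightarrow>
               2/3 * (sin x / x) powr p + 1/3 * (tan x / x) powr p > 1)
            \<longleftrightarrow> (p > 0 \<or> p \<le> - ((ln 3 - ln 2) / (ln pi - ln 2))))) \<and>
         (\<forall>q::real. q \<noteq> 0 \<longrightarrow>
           ((\<forall>x::real. 0 < x \<and> x < pi / 2 \<longrightarrow>
               2/3 * (sin x / x) powr q + 1/3 * (tan x / x) powr q < 1)
            \<longleftrightarrow> (-4/5 \<le> q \<and> q < 0)))"
  using one_less_sin_tan_mean_iff sin_tan_mean_less_one_iff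
  unfolding sin_tan_mean_def crit_exp_def by simp

end
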